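(* Let $G$ be a strongly connected directed multigraph with a designated set of ordinary vertices such that every two distinct ordinary vertices are $(k+1)$-edge-connected, and let $s$ be a fixed ordinary vertex. Let $u$ and $w$ be two ordinary vertices such that $M(u)\neq M(w)$. Then either $M(u)\neq\bot$ and $w\notin M(u)$, or $M(w)\neq\bot$ and $u\notin M(w)$.
   Context: For a vertex set $S$, $\mathit{out}(S)$ is the number of edges leaving $S$; $S$ is a $j$-out set if $\mathit{out}(S)=j$. For vertices $x,y$, $\lambda(x,y)$ is the minimum of $\mathit{out}(S)$ over vertex sets $S$ with $x\in S$, $y\notin S$. Two vertices $x,y$ are $j$-edge-connected if $\lambda(x,y)\ge j$ and $\lambda(y,x)\ge j$. For a vertex $v$ with $\lambda(v,s)\ge k+1$: if there is a $(k+1)$-out set $S$ with $v\in S$, $s\notin S$, then $M(v)$ denotes the inclusion-wise minimum such $(k+1)$-out set; otherwise $M(v)=\bot$. *)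

theory Defs
  imports Main
begin

text \<open>A directed multigraph is given by a finite vertex set V and an edge
multiplicity function c, where c x y is the number of edges from x to y.\<close>

definition out_deg :: "'a set \<Rightarrow> ('a \<Rightarrow> 'a \<Rightarrow> nat) \<Rightarrow> 'a set \<Rightarrow> nat" where
  "out_deg V c S = (\<Sum>x\<in>S. \<Sum>y\<in>V - S. c x y)"

definition lam :: "'a set \<Rightarrow> ('a \<Rightarrow> 'a \<Rightarrow> nat) \<Rightarrow> 'a \<Rightarrow> 'a \<Rightarrow> nat" where
  "lam V c x y = Min {out_deg V c S | S. S \<subseteq> V \<and> x \<in> S \<and> y \<notin> S}"

definition edge_connected :: "'a set \<Rightarrow> ('a \<Rightarrow> 'a \<Rightarrow> nat) \<Rightarrow> nat \<Rightarrow> 'a \<Rightarrow> 'a \<Rightarrow> bool" where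
  "edge_connected V c j x y \<longleftrightarrow> lam V c x y \<ge> j \<and> lam V c y x \<ge> j"

definition strongly_connected :: "'a set \<Rightarrow> ('a \<Rightarrow> 'a \<Rightarrow> nat) \<Rightarrow> bool" where
  "strongly_connected V c \<longleftrightarrow>
     (\<forall>x\<in>V. \<forall>y\<in>V. (\<lambda>a b. a \<in> V \<and> b \<in> V \<and> c a b > 0)\<^sup>*\<^sup>* x y)"

definition out_sep :: "'a set \<Rightarrow> ('a \<Rightarrow> 'a \<Rightarrow> nat) \<Rightarrow> nat \<Rightarrow> 'a \<Rightarrow> 'a \<Rightarrow> 'a set \<Rightarrow> bool" where
  "out_sep V c k s v S \<longleftrightarrow> S \<subseteq> V \<and> v \<in> S \<and> s \<notin> S \<and> out_deg V c S = k + 1"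

text \<open>M(v): None encodes \<bottom>; otherwise the inclusion-wise minimum (k+1)-out set.\<close>
definition Mset :: "'a set \<Rightarrow> ('a \<Rightarrow> 'a \<Rightarrow> nat) \<Rightarrow> nat \<Rightarrow> 'a \<Rightarrow> 'a \<Rightarrow> 'a set option" where
  "Mset V c k s v =
     (if \<exists>S. out_sep V c k s v S
      then Some (THE S. out_sep V c k s v S \<and> (\<forall>T. out_sep V c k s v T \<longrightarrow> S \<subseteq> T))
      else None)"

end

theory Submission
  imports Defs
begin

text \<open>Since \<open>\<lambda>(v, s) \<ge> k + 1\<close>, the \<open>(k+1)\<close>-out sets separating \<open>v\<close> from \<open>s\<close> are
minimum cuts, and by submodularity of \<open>out\<close> they are closed under intersection; hence
\<open>M(v)\<close> exists whenever some such set does. If \<open>w \<in> M(u)\<close>, then \<open>M(u)\<close> is a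
\<open>(k+1)\<close>-out set for \<open>w\<close>, so \<open>M(w) \<subseteq> M(u)\<close>. Thus if both \<open>w \<in> M(u)\<close> and
\<open>u \<in> M(w)\<close>, the two sets coincide; and if \<open>M(u) = \<bottom>\<close>, then \<open>u \<notin> M(w)\<close> because
\<open>M(w)\<close> would otherwise be a \<open>(k+1)\<close>-out set for \<open>u\<close>.\<close>

lemma out_deg_eq_double_sum:
  assumes "finite V" "S \<subseteq> V"
  shows "out_deg V c S = (\<Sum>x\<in>V. \<Sum>y\<in>V. if x \<in> S \<and> y \<notin> S then c x y else 0)"
proof -
  have "(\<Sum>x\<in>V. \<Sum>y\<in>V. if x \<in> S \<and> y \<notin> S then c x y else 0)
      = (\<Sum>x\<in>V. if x \<in> S then \<Sum>y\<in>V - S. c x y else 0)"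
    using assms(1) by (intro sum.cong) (auto simp: sum.If_cases Diff_eq Compl_eq)
  also have "\<dots> = out_deg V c S"
    using assms by (simp add: out_deg_def sum.If_cases Int_absorb1)
  finally show ?thesis ..
qed

lemma out_deg_submodular:
  assumes "finite V" "A \<subseteq> V" "B \<subseteq> V"
  shows "out_deg V c (A \<inter> B) + out_deg V c (A \<union> B) \<le> out_deg V c A + out_deg V c B"
  using assms
  by (simp add: out_deg_eq_double_sum le_infI1 le_supI sum.distrib[symmetric] sum_mono)

lemma lam_le_out_deg:
  assumes "finite V" "S \<subseteq> V" "x \<in> S" "y \<notin> S"
  shows "lam V c x y \<le> out_deg V c S"
proof -
  have "{out_deg V c S | S. S \<subseteq> V \<and> x \<in> S \<and> y \<notin> S} \<subseteq> out_deg V c ` Pow V"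
    by auto
  then have "finite {out_deg V c S | S. S \<subseteq> V \<and> x \<in> S \<and> y \<notin> S}"
    using assms(1) finite_subset by blast
  then show ?thesis
    unfolding lam_def using assms by (intro Min_le) auto
qed

lemma out_sep_Int:
  assumes "finite V" "k + 1 \<le> lam V c v s"
    and "out_sep V c k s v A" "out_sep V c k s v B"
  shows "out_sep V c k s v (A \<inter> B)"
proof -
  have A: "A \<subseteq> V" "v \<in> A" "s \<notin> A" "out_deg V c A = k + 1"
    and B: "B \<subseteq> V" "v \<in> B" "s \<notin> B" "out_deg V c B = k + 1"
    using assms(3,4) unfolding out_sep_def by auto
  have "lam V c v s \<le> out_deg V c (A \<inter> B)" "lam V c v s \<le> out_deg V c (A \<union> B)"
    using A B by (auto intro!: lam_le_out_deg[OF assms(1)])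
  with out_deg_submodular[OF assms(1) A(1) B(1), of c] A(4) B(4) assms(2)
  have "out_deg V c (A \<inter> B) = k + 1"
    by linarith
  with A B show ?thesis
    unfolding out_sep_def by auto
qed

lemma out_sep_least_exists:
  assumes "finite V" "k + 1 \<le> lam V c v s" "out_sep V c k s v S"
  shows "\<exists>M. out_sep V c k s v M \<and> (\<forall>T. out_sep V c k s v T \<longrightarrow> M \<subseteq> T)"
proof -
  obtain M where M: "out_sep V c k s v M"
    and M_card: "\<And>T. out_sep V c k s v T \<Longrightarrow> card M \<le> card T"
    using ex_has_least_nat[of "out_sep V c k s v" S card] assms(3) by blast
  have "M \<subseteq> T" if T: "out_sep V c k s v T" for T
  proof (rule ccontr)
    assume "\<not> M \<subseteq> T"
    moreover have "finite M"
      using M assms(1) finite_subset unfolding out_sep_def by blast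
    ultimately have "card (M \<inter> T) < card M"
      by (intro psubset_card_mono) auto
    with M_card[OF out_sep_Int[OF assms(1,2) M T]] show False
      by simp
  qed
  with M show ?thesis
    by blast
qed

lemma Mset_eq_None_iff: "Mset V c k s v = None \<longleftrightarrow> (\<nexists>S. out_sep V c k s v S)"
  unfolding Mset_def by simp

text \<open>The guard \<open>v \<noteq> s\<close> is needed since \<open>lam V c s s\<close> is the junk value \<open>Min {}\<close>.\<close>

lemma Mset_eq_SomeD:
  assumes "finite V" "v \<noteq> s \<longrightarrow> k + 1 \<le> lam V c v s" "Mset V c k s v = Some M"
  shows "out_sep V c k s v M" "\<And>T. out_sep V c k s v T \<Longrightarrow> M \<subseteq> T"
proof -
  obtain S where S: "out_sep V c k s v S"
    using assms(3) Mset_eq_None_iff by (metis option.distinct(1))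
  then have "k + 1 \<le> lam V c v s"
    using assms(2) unfolding out_sep_def by auto
  then obtain M' where M': "out_sep V c k s v M'" "\<forall>T. out_sep V c k s v T \<longrightarrow> M' \<subseteq> T"
    using out_sep_least_exists[OF assms(1) _ S] by blast
  then have "(THE S. out_sep V c k s v S \<and> (\<forall>T. out_sep V c k s v T \<longrightarrow> S \<subseteq> T)) = M'"
    by (intro the_equality) auto
  with S have "Mset V c k s v = Some M'"
    unfolding Mset_def by auto
  with assms(3) have "M = M'"
    by simp
  with M' show "out_sep V c k s v M" "\<And>T. out_sep V c k s v T \<Longrightarrow> M \<subseteq> T"
    by auto
qed

lemma out_sep_of_mem:
  assumes "out_sep V c k s v S" "w \<in> S"
  shows "out_sep V c k s w S"
  using assms unfolding out_sep_def by auto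

lemma Mset_neq_imp_not_mem:
  assumes "finite V"
    and u: "u \<noteq> s \<longrightarrow> k + 1 \<le> lam V c u s"
    and w: "w \<noteq> s \<longrightarrow> k + 1 \<le> lam V c w s"
    and neq: "Mset V c k s u \<noteq> Mset V c k s w"
  shows "(\<exists>Mu. Mset V c k s u = Some Mu \<and> w \<notin> Mu)
       \<or> (\<exists>Mw. Mset V c k s w = Some Mw \<and> u \<notin> Mw)"
proof (cases "Mset V c k s u")
  case None
  then obtain Mw where Mw: "Mset V c k s w = Some Mw"
    using neq by (cases "Mset V c k s w") simp_all
  have "u \<notin> Mw"
  proof
    assume "u \<in> Mw"
    with Mset_eq_SomeD(1)[OF assms(1) w Mw] have "out_sep V c k s u Mw"
      by (rule out_sep_of_mem)
    with None show False
      by (simp add: Mset_eq_None_iff)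
  qed
  with Mw show ?thesis
    by blast
next
  case (Some Mu)
  note Mu = Mset_eq_SomeD[OF assms(1) u Some]
  show ?thesis
  proof (cases "w \<in> Mu")
    case True
    with Mu(1) have Mu_w: "out_sep V c k s w Mu"
      by (rule out_sep_of_mem)
    then obtain Mw where Mw: "Mset V c k s w = Some Mw"
      by (cases "Mset V c k s w") (auto simp: Mset_eq_None_iff)
    note Mw_least = Mset_eq_SomeD[OF assms(1) w Mw]
    have "u \<notin> Mw"
    proof
      assume "u \<in> Mw"
      then have "Mu \<subseteq> Mw"
        using Mu(2) out_sep_of_mem[OF Mw_least(1)] by blast
      with Mw_least(2)[OF Mu_w] Some Mw neq show False
        by simp
    qed
    with Mw show ?thesis
      by blast
  qed (use Some in blast)
qed

theorem mainTheorem4: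
  fixes V :: "'a set" and c :: "'a \<Rightarrow> 'a \<Rightarrow> nat" and Ord :: "'a set"
    and k :: nat and s u w :: 'a
  assumes "finite V"
    and "strongly_connected V c"
    and "Ord \<subseteq> V"
    and "\<forall>x\<in>Ord. \<forall>y\<in>Ord. x \<noteq> y \<longrightarrow> edge_connected V c (k + 1) x y"
    and "s \<in> Ord" and "u \<in> Ord" and "w \<in> Ord"
    and "Mset V c k s u \<noteq> Mset V c k s w"
  shows "(\<exists>Mu. Mset V c k s u = Some Mu \<and> w \<notin> Mu)
       \<or> (\<exists>Mw. Mset V c k s w = Some Mw \<and> u \<notin> Mw)"
proof (rule Mset_neq_imp_not_mem[OF assms(1) _ _ assms(8)])
  \<comment> \<open>Only \<open>\<lambda>(v, s) \<ge> k + 1\<close> is used.\<close>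
  have "k + 1 \<le> lam V c v s" if "v \<in> Ord" "v \<noteq> s" for v
    using assms(4,5) that unfolding edge_connected_def by blast
  then show "u \<noteq> s \<longrightarrow> k + 1 \<le> lam V c u s" "w \<noteq> s \<longrightarrow> k + 1 \<le> lam V c w s"
    using assms(6,7) by blast+
qed

end
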